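(* Let $(X,\Sigma,\mu)$ be a complete $\sigma$-finite measure space, $\mathcal{A}\subseteq\Sigma$ a sub-$\sigma$-finite algebra, $E=E^{\mathcal{A}}$ the associated conditional expectation, and $u\in\mathcal{D}(E)$ such that $T=EM_u$ is a bounded operator on $L^2(\Sigma)$. For $\lambda\in\mathbb{C}$ let $A_\lambda=\{x\in X: E(u)(x)=\lambda\}$. Then: (a) $\sigma_p(EM_u)\setminus\{0\}=\{\lambda\in\mathbb{C}\setminus\{0\}:\mu(A_\lambda)>0\}$. (b) $\{\lambda\in\mathbb{C}:\mu(A_\lambda)>0\}\subseteq\sigma_p(EM_u)$. (c) If $\mu(\{x\in X: E(u)(x)=0\})>0$, then $\{\lambda\in\mathbb{C}:\mu(A_\lambda)>0\}=\sigma_p(EM_u)$.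
   Context: For a sub-$\sigma$-finite algebra $\mathcal{A}\subseteq\Sigma$, $E=E^{\mathcal{A}}$ denotes the conditional expectation: for $f\geq 0$ measurable or $f\in L^2(\Sigma)$, $Ef$ is the unique $\mathcal{A}$-measurable function with $\int_A f\,d\mu=\int_A Ef\,d\mu$ for all $A\in\mathcal{A}$. $\mathcal{D}(E)=\{g\in L^0(\Sigma): E(|g|)\in L^0(\mathcal{A})\}$, where $L^0$ denotes a.e. finite measurable functions. $EM_u f=E(uf)$. $\sigma_p(T)$ is the point spectrum: the set of $\lambda\in\mathbb{C}$ for which there is a unit vector $x$ with $(T-\lambda)x=0$. *)

theory Defs
  imports "HOL-Probability.Probability"
begin

text \<open>Conditional expectation of a complex-valued function, defined componentwise via the
library's real conditional expectation (which is itself defined through the positive and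
negative parts, i.e. through nn_cond_exp). For g in D(E) this is the usual extension of E.\<close>
definition cond_exp_c :: "'a measure \<Rightarrow> 'a measure \<Rightarrow> ('a \<Rightarrow> complex) \<Rightarrow> ('a \<Rightarrow> complex)" where
  "cond_exp_c M F g = (\<lambda>x. complex_of_real (real_cond_exp M F (\<lambda>y. Re (g y)) x)
                          + \<i> * complex_of_real (real_cond_exp M F (\<lambda>y. Im (g y)) x))"

definition domE :: "'a measure \<Rightarrow> 'a measure \<Rightarrow> ('a \<Rightarrow> complex) set" where
  "domE M F = {g. g \<in> borel_measurable M \<and>
      (AE x in M. nn_cond_exp M F (\<lambda>y. ennreal (cmod (g y))) x < \<infinity>)}"

text \<open>Square integrable complex functions (representatives of L^2(Sigma)).\<close>
definition L2c :: "'a measure \<Rightarrow> ('a \<Rightarrow> complex) set" where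
  "L2c M = {f. f \<in> borel_measurable M \<and> integrable M (\<lambda>x. (cmod (f x))\<^sup>2)}"

definition L2norm :: "'a measure \<Rightarrow> ('a \<Rightarrow> complex) \<Rightarrow> real" where
  "L2norm M f = sqrt (\<integral>x. (cmod (f x))\<^sup>2 \<partial>M)"

definition EMu_bounded :: "'a measure \<Rightarrow> 'a measure \<Rightarrow> ('a \<Rightarrow> complex) \<Rightarrow> bool" where
  "EMu_bounded M F u \<longleftrightarrow> (\<exists>C. \<forall>f \<in> L2c M.
      (\<lambda>x. u x * f x) \<in> domE M F \<and>
      cond_exp_c M F (\<lambda>x. u x * f x) \<in> L2c M \<and>
      L2norm M (cond_exp_c M F (\<lambda>x. u x * f x)) \<le> C * L2norm M f)"

text \<open>Point spectrum of EM_u on L^2(Sigma): eigenvalues with a unit eigenvector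
(equality of L^2 elements = equality almost everywhere).\<close>
definition point_spectrum_EMu :: "'a measure \<Rightarrow> 'a measure \<Rightarrow> ('a \<Rightarrow> complex) \<Rightarrow> complex set" where
  "point_spectrum_EMu M F u = {c. \<exists>f \<in> L2c M. L2norm M f = 1 \<and>
      (AE x in M. cond_exp_c M F (\<lambda>y. u y * f y) x = c * f x)}"

definition level_set_Eu :: "'a measure \<Rightarrow> 'a measure \<Rightarrow> ('a \<Rightarrow> complex) \<Rightarrow> complex \<Rightarrow> 'a set" where
  "level_set_Eu M F u c = {x \<in> space M. cond_exp_c M F u x = c}"

end

theory Submission
  imports Defs
begin

text \<open>Pulling an \<open>\<A>\<close>-measurable factor out of \<open>E\<close> only needs \<open>E|u|\<close> to be finite a.e., so
\<open>EM\<^sub>u\<close> acts on \<open>\<A>\<close>-measurable functions as multiplication by \<open>E(u)\<close>. Hence a normalized indicator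
of an \<open>\<A>\<close>-set of finite positive measure inside \<open>A\<^sub>\<lambda>\<close> is an eigenvector for \<open>\<lambda>\<close>. Conversely, an
eigenvector \<open>f\<close> for \<open>\<lambda> \<noteq> 0\<close> agrees a.e. with the \<open>\<A>\<close>-measurable function \<open>h = E(uf)/\<lambda>\<close>, so
\<open>\<lambda>h = E(uh) = h E(u)\<close> a.e. and \<open>f\<close> vanishes off \<open>A\<^sub>\<lambda>\<close>.\<close>

lemma ennreal_pos_neg_parts_add:
  fixes a b :: real
  shows "ennreal (a + b) + (ennreal (- a) + ennreal (- b)) = ennreal (- (a + b)) + (ennreal a + ennreal b)"
  by (cases "0 \<le> a"; cases "0 \<le> b"; cases "0 \<le> a + b")
     (auto simp: ennreal_neg ennreal_plus[symmetric] simp del: ennreal_plus)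

lemma real_cond_exp_uminus: "real_cond_exp M F (\<lambda>x. - g x) x = - real_cond_exp M F g x"
  by (simp add: real_cond_exp_def)

lemma cond_exp_c_measurable [measurable]: "cond_exp_c M F g \<in> borel_measurable F"
  unfolding cond_exp_c_def by measurable

context sigma_finite_subalgebra begin

lemma nn_cond_exp_finite_if_le:
  assumes [measurable]: "f \<in> borel_measurable M" "g \<in> borel_measurable M"
    and le: "\<And>x. f x \<le> g x" and fin: "AE x in M. nn_cond_exp M F g x < \<infinity>"
  shows "AE x in M. nn_cond_exp M F f x < \<infinity>"
proof -
  have "AE x in M. nn_cond_exp M F f x \<le> nn_cond_exp M F g x"
    by (rule nn_cond_exp_mono) (auto simp: le)
  with fin show ?thesis by eventually_elim (rule le_less_trans)
qed

lemma nn_cond_exp_abs_add_finite: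
  assumes [measurable]: "g1 \<in> borel_measurable M" "g2 \<in> borel_measurable M"
    and fin1: "AE x in M. nn_cond_exp M F (\<lambda>x. ennreal \<bar>g1 x\<bar>) x < \<infinity>"
    and fin2: "AE x in M. nn_cond_exp M F (\<lambda>x. ennreal \<bar>g2 x\<bar>) x < \<infinity>"
  shows "AE x in M. nn_cond_exp M F (\<lambda>x. ennreal \<bar>g1 x + g2 x\<bar>) x < \<infinity>"
proof (rule nn_cond_exp_finite_if_le)
  show "ennreal \<bar>g1 x + g2 x\<bar> \<le> ennreal \<bar>g1 x\<bar> + ennreal \<bar>g2 x\<bar>" for x
    by (simp add: ennreal_plus[symmetric] ennreal_leI abs_triangle_ineq del: ennreal_plus)
  have "AE x in M. nn_cond_exp M F (\<lambda>x. ennreal \<bar>g1 x\<bar>) x + nn_cond_exp M F (\<lambda>x. ennreal \<bar>g2 x\<bar>) x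
      = nn_cond_exp M F (\<lambda>x. ennreal \<bar>g1 x\<bar> + ennreal \<bar>g2 x\<bar>) x"
    by (rule nn_cond_exp_sum) auto
  with fin1 fin2 show "AE x in M. nn_cond_exp M F (\<lambda>x. ennreal \<bar>g1 x\<bar> + ennreal \<bar>g2 x\<bar>) x < \<infinity>"
    by eventually_elim (metis ennreal_add_eq_top infinity_ennreal_def top.not_eq_extremum)
qed auto

lemma nn_cond_exp_abs_mult_finite:
  assumes [measurable]: "p \<in> borel_measurable F" "g \<in> borel_measurable M"
    and fin: "AE x in M. nn_cond_exp M F (\<lambda>x. ennreal \<bar>g x\<bar>) x < \<infinity>"
  shows "AE x in M. nn_cond_exp M F (\<lambda>x. ennreal \<bar>p x * g x\<bar>) x < \<infinity>"
proof -
  have "AE x in M. ennreal \<bar>p x\<bar> * nn_cond_exp M F (\<lambda>x. ennreal \<bar>g x\<bar>) x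
      = nn_cond_exp M F (\<lambda>x. ennreal \<bar>p x\<bar> * ennreal \<bar>g x\<bar>) x"
    by (rule nn_cond_exp_prod) auto
  with fin show ?thesis
  proof eventually_elim
    case (elim x)
    then show ?case
      by (simp add: abs_mult ennreal_mult ennreal_mult_less_top flip: elim(2))
  qed
qed

text \<open>The library's additivity and pull-out rules for \<open>real_cond_exp\<close> assume integrability;
a.e. finiteness of \<open>E|g|\<close> suffices, because then positive and negative parts have finite
conditional expectations and can be compared in \<open>ennreal\<close>.\<close>

lemma real_cond_exp_add_finite:
  assumes [measurable]: "g1 \<in> borel_measurable M" "g2 \<in> borel_measurable M"
    and fin1: "AE x in M. nn_cond_exp M F (\<lambda>x. ennreal \<bar>g1 x\<bar>) x < \<infinity>"
    and fin2: "AE x in M. nn_cond_exp M F (\<lambda>x. ennreal \<bar>g2 x\<bar>) x < \<infinity>"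
  shows "AE x in M. real_cond_exp M F (\<lambda>x. g1 x + g2 x) x = real_cond_exp M F g1 x + real_cond_exp M F g2 x"
proof -
  let ?N = "\<lambda>g. nn_cond_exp M F (\<lambda>x. ennreal (g x))"
  have parts_finite: "AE x in M. ?N g x < \<infinity> \<and> ?N (\<lambda>x. - g x) x < \<infinity>"
    if [measurable]: "g \<in> borel_measurable M"
      and "AE x in M. nn_cond_exp M F (\<lambda>x. ennreal \<bar>g x\<bar>) x < \<infinity>" for g
  proof -
    have "AE x in M. ?N g x < \<infinity>" "AE x in M. ?N (\<lambda>x. - g x) x < \<infinity>"
      by (rule nn_cond_exp_finite_if_le[OF _ _ _ that(2)]; auto intro: ennreal_leI)+
    then show ?thesis by eventually_elim simp
  qed
  let ?s = "\<lambda>x. g1 x + g2 x"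
  have s_meas: "?s \<in> borel_measurable M" by measurable
  have parts_identity: "AE x in M. ?N ?s x + (?N (\<lambda>x. - g1 x) x + ?N (\<lambda>x. - g2 x) x)
      = ?N (\<lambda>x. - ?s x) x + (?N g1 x + ?N g2 x)"
  proof -
    have "AE x in M. ?N ?s x + (?N (\<lambda>x. - g1 x) x + ?N (\<lambda>x. - g2 x) x)
        = nn_cond_exp M F (\<lambda>x. ennreal (?s x) + (ennreal (- g1 x) + ennreal (- g2 x))) x"
      using nn_cond_exp_sum[of "\<lambda>x. ennreal (- g1 x)" "\<lambda>x. ennreal (- g2 x)", simplified]
        nn_cond_exp_sum[of "\<lambda>x. ennreal (?s x)" "\<lambda>x. ennreal (- g1 x) + ennreal (- g2 x)", simplified]
      by eventually_elim auto
    moreover have "AE x in M. ?N (\<lambda>x. - ?s x) x + (?N g1 x + ?N g2 x)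
        = nn_cond_exp M F (\<lambda>x. ennreal (- ?s x) + (ennreal (g1 x) + ennreal (g2 x))) x"
      using nn_cond_exp_sum[of "\<lambda>x. ennreal (g1 x)" "\<lambda>x. ennreal (g2 x)", simplified]
        nn_cond_exp_sum[of "\<lambda>x. ennreal (- ?s x)" "\<lambda>x. ennreal (g1 x) + ennreal (g2 x)", simplified]
      by eventually_elim auto
    ultimately show ?thesis
      unfolding ennreal_pos_neg_parts_add by eventually_elim (rule trans, assumption, rule sym)
  qed
  show ?thesis
    using parts_identity parts_finite[OF assms(1) fin1] parts_finite[OF assms(2) fin2]
      parts_finite[OF s_meas nn_cond_exp_abs_add_finite[OF assms(1,2) fin1 fin2]]
  proof eventually_elim
    case (elim x)
    from arg_cong[OF elim(1), of enn2real] elim(2-4) show ?case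
      by (simp add: real_cond_exp_def enn2real_plus)
  qed
qed

lemma real_cond_exp_mult_nonneg:
  assumes [measurable]: "p \<in> borel_measurable F" "g \<in> borel_measurable M" and nonneg: "\<And>x. p x \<ge> 0"
  shows "AE x in M. real_cond_exp M F (\<lambda>x. p x * g x) x = p x * real_cond_exp M F g x"
proof -
  have parts: "(\<lambda>x. ennreal (p x * g x)) = (\<lambda>x. ennreal (p x) * ennreal (g x))"
    "(\<lambda>x. ennreal (- (p x * g x))) = (\<lambda>x. ennreal (p x) * ennreal (- g x))"
    using nonneg by (simp_all add: ennreal_mult'[symmetric])
  have "AE x in M. ennreal (p x) * nn_cond_exp M F (\<lambda>x. ennreal (g x)) x
      = nn_cond_exp M F (\<lambda>x. ennreal (p x) * ennreal (g x)) x"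
    "AE x in M. ennreal (p x) * nn_cond_exp M F (\<lambda>x. ennreal (- g x)) x
      = nn_cond_exp M F (\<lambda>x. ennreal (p x) * ennreal (- g x)) x"
    by (rule nn_cond_exp_prod; simp)+
  then show ?thesis
  proof eventually_elim
    case (elim x)
    show ?case
      unfolding real_cond_exp_def parts elim[symmetric]
      by (simp add: enn2real_mult nonneg right_diff_distrib)
  qed
qed

lemma real_cond_exp_mult_finite:
  assumes [measurable]: "p \<in> borel_measurable F" "g \<in> borel_measurable M"
    and fin: "AE x in M. nn_cond_exp M F (\<lambda>x. ennreal \<bar>g x\<bar>) x < \<infinity>"
  shows "AE x in M. real_cond_exp M F (\<lambda>x. p x * g x) x = p x * real_cond_exp M F g x"
proof -
  define pos neg where "pos x = max (p x) 0" and "neg x = max (- p x) 0" for x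
  have [measurable]: "pos \<in> borel_measurable F" "neg \<in> borel_measurable F"
    unfolding pos_def neg_def by measurable
  have [measurable]: "pos \<in> borel_measurable M" "neg \<in> borel_measurable M"
    by (rule measurable_from_subalg[OF subalg], measurable)+
  have pos_neg: "p x = pos x - neg x" for x
    by (simp add: pos_def neg_def max_def)
  have split: "(\<lambda>x. p x * g x) = (\<lambda>x. pos x * g x + - (neg x * g x))"
    by (simp add: pos_neg algebra_simps)
  have "AE x in M. real_cond_exp M F (\<lambda>x. pos x * g x + - (neg x * g x)) x
      = real_cond_exp M F (\<lambda>x. pos x * g x) x + real_cond_exp M F (\<lambda>x. - (neg x * g x)) x"
    using nn_cond_exp_abs_mult_finite[of pos g] nn_cond_exp_abs_mult_finite[of neg g] fin
    by (intro real_cond_exp_add_finite) auto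
  moreover have "AE x in M. real_cond_exp M F (\<lambda>x. pos x * g x) x = pos x * real_cond_exp M F g x"
    by (rule real_cond_exp_mult_nonneg) (auto simp: pos_def)
  moreover have "AE x in M. real_cond_exp M F (\<lambda>x. neg x * g x) x = neg x * real_cond_exp M F g x"
    by (rule real_cond_exp_mult_nonneg) (auto simp: neg_def)
  ultimately show ?thesis
    unfolding split by eventually_elim (simp add: real_cond_exp_uminus pos_neg left_diff_distrib)
qed

lemma real_cond_exp_linear_comb:
  assumes [measurable]: "p \<in> borel_measurable F" "q \<in> borel_measurable F"
    "g1 \<in> borel_measurable M" "g2 \<in> borel_measurable M"
    and fin1: "AE x in M. nn_cond_exp M F (\<lambda>x. ennreal \<bar>g1 x\<bar>) x < \<infinity>"
    and fin2: "AE x in M. nn_cond_exp M F (\<lambda>x. ennreal \<bar>g2 x\<bar>) x < \<infinity>"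
  shows "AE x in M. real_cond_exp M F (\<lambda>x. p x * g1 x + q x * g2 x) x
           = p x * real_cond_exp M F g1 x + q x * real_cond_exp M F g2 x"
proof -
  have [measurable]: "p \<in> borel_measurable M" "q \<in> borel_measurable M"
    by (rule measurable_from_subalg[OF subalg], measurable)+
  have "AE x in M. real_cond_exp M F (\<lambda>x. p x * g1 x + q x * g2 x) x
      = real_cond_exp M F (\<lambda>x. p x * g1 x) x + real_cond_exp M F (\<lambda>x. q x * g2 x) x"
    using nn_cond_exp_abs_mult_finite[OF assms(1,3) fin1] nn_cond_exp_abs_mult_finite[OF assms(2,4) fin2]
    by (intro real_cond_exp_add_finite) auto
  moreover have "AE x in M. real_cond_exp M F (\<lambda>x. p x * g1 x) x = p x * real_cond_exp M F g1 x"
    by (rule real_cond_exp_mult_finite[OF _ _ fin1]) auto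
  moreover have "AE x in M. real_cond_exp M F (\<lambda>x. q x * g2 x) x = q x * real_cond_exp M F g2 x"
    by (rule real_cond_exp_mult_finite[OF _ _ fin2]) auto
  ultimately show ?thesis by eventually_elim simp
qed

lemma cond_exp_c_cong:
  assumes "AE x in M. g1 x = g2 x" and [measurable]: "g1 \<in> borel_measurable M" "g2 \<in> borel_measurable M"
  shows "AE x in M. cond_exp_c M F g1 x = cond_exp_c M F g2 x"
proof -
  have "AE x in M. real_cond_exp M F (\<lambda>x. Re (g1 x)) x = real_cond_exp M F (\<lambda>x. Re (g2 x)) x"
    "AE x in M. real_cond_exp M F (\<lambda>x. Im (g1 x)) x = real_cond_exp M F (\<lambda>x. Im (g2 x)) x"
    by (rule real_cond_exp_cong; use assms(1) in auto)+
  then show ?thesis by eventually_elim (simp add: cond_exp_c_def)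
qed

lemma cond_exp_c_mult_measurable:
  assumes u: "u \<in> domE M F" and [measurable]: "h \<in> borel_measurable F"
  shows "AE x in M. cond_exp_c M F (\<lambda>x. u x * h x) x = h x * cond_exp_c M F u x"
proof -
  have [measurable]: "u \<in> borel_measurable M"
    and fin: "AE x in M. nn_cond_exp M F (\<lambda>x. ennreal (cmod (u x))) x < \<infinity>"
    using u by (auto simp: domE_def)
  have fin_Re: "AE x in M. nn_cond_exp M F (\<lambda>x. ennreal \<bar>Re (u x)\<bar>) x < \<infinity>"
    and fin_Im: "AE x in M. nn_cond_exp M F (\<lambda>x. ennreal \<bar>Im (u x)\<bar>) x < \<infinity>"
    by (rule nn_cond_exp_finite_if_le[OF _ _ _ fin]; auto intro: ennreal_leI abs_Re_le_cmod abs_Im_le_cmod)+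
  have Re_prod: "(\<lambda>x. Re (u x * h x)) = (\<lambda>x. Re (h x) * Re (u x) + - Im (h x) * Im (u x))"
    and Im_prod: "(\<lambda>x. Im (u x * h x)) = (\<lambda>x. Im (h x) * Re (u x) + Re (h x) * Im (u x))"
    by (simp_all add: algebra_simps)
  have "AE x in M. real_cond_exp M F (\<lambda>x. Re (h x) * Re (u x) + - Im (h x) * Im (u x)) x
     = Re (h x) * real_cond_exp M F (\<lambda>x. Re (u x)) x + - Im (h x) * real_cond_exp M F (\<lambda>x. Im (u x)) x"
    "AE x in M. real_cond_exp M F (\<lambda>x. Im (h x) * Re (u x) + Re (h x) * Im (u x)) x
     = Im (h x) * real_cond_exp M F (\<lambda>x. Re (u x)) x + Re (h x) * real_cond_exp M F (\<lambda>x. Im (u x)) x"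
    by (rule real_cond_exp_linear_comb[OF _ _ _ _ fin_Re fin_Im]; simp)+
  then show ?thesis
    by eventually_elim (simp add: cond_exp_c_def Re_prod Im_prod complex_eq_iff algebra_simps)
qed

lemma level_set_Eu_in_sets_F: "level_set_Eu M F u c \<in> sets F"
proof -
  have "level_set_Eu M F u c = {x \<in> space F. cond_exp_c M F u x = c}"
    using subalg by (simp add: level_set_Eu_def subalgebra_def)
  also have "\<dots> \<in> sets F" by measurable
  finally show ?thesis .
qed

end

lemma (in sigma_finite_measure) obtain_subset_finite_positive_measure:
  assumes "W \<in> sets M" "emeasure M W > 0"
  obtains Z where "Z \<in> sets M" "Z \<subseteq> W" "0 < emeasure M Z" "emeasure M Z < \<infinity>"
proof (cases "emeasure M W = \<infinity>")
  case True
  then show ?thesis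
    using approx_PInf_emeasure_with_finite[OF assms(1), of 0] that by (metis ennreal_0)
qed (use assms that in \<open>auto simp: less_top\<close>)

lemma (in sigma_finite_subalgebra) obtain_subalg_subset_finite_positive_measure:
  assumes "A \<in> sets F" "emeasure M A > 0"
  obtains B where "B \<in> sets F" "B \<subseteq> A" "0 < emeasure M B" "emeasure M B < \<infinity>"
proof -
  interpret restr: sigma_finite_measure "restr_to_subalg M F" by (rule sigma_fin_subalg)
  have "A \<in> sets (restr_to_subalg M F)" "emeasure (restr_to_subalg M F) A > 0"
    using assms by (simp_all add: sets_restr_to_subalg[OF subalg] emeasure_restr_to_subalg[OF subalg])
  then obtain B where "B \<in> sets (restr_to_subalg M F)" "B \<subseteq> A"
    "0 < emeasure (restr_to_subalg M F) B" "emeasure (restr_to_subalg M F) B < \<infinity>"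
    by (rule restr.obtain_subset_finite_positive_measure)
  with that show ?thesis
    by (simp add: sets_restr_to_subalg[OF subalg] emeasure_restr_to_subalg[OF subalg])
qed

lemma normalized_indicator_L2:
  assumes [measurable]: "B \<in> sets M" and pos: "0 < emeasure M B" and fin: "emeasure M B < \<infinity>"
  defines "f \<equiv> \<lambda>x. complex_of_real (indicator B x / sqrt (measure M B))"
  shows "f \<in> L2c M" and "L2norm M f = 1"
proof -
  have m_pos: "measure M B > 0"
    using pos fin by (simp add: emeasure_eq_ennreal_measure measure_nonneg less_top)
  have sq: "(\<lambda>x. (cmod (f x))\<^sup>2) = (\<lambda>x. indicator B x / measure M B)"
    using m_pos by (intro ext) (simp add: f_def indicator_def power_divide norm_divide)
  have "integrable M (\<lambda>x. indicator B x / measure M B)"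
    using fin by (simp add: less_top)
  moreover have "f \<in> borel_measurable M" unfolding f_def by measurable
  ultimately show "f \<in> L2c M" by (simp add: L2c_def sq)
  show "L2norm M f = 1"
    using m_pos fin by (simp add: L2norm_def sq less_top)
qed

lemma point_spectrum_EMu_if_level_set_positive:
  assumes "sigma_finite_subalgebra M F" and u: "u \<in> domE M F"
    and pos: "emeasure M (level_set_Eu M F u c) > 0"
  shows "c \<in> point_spectrum_EMu M F u"
proof -
  interpret sigma_finite_subalgebra M F by fact
  obtain B where BF [measurable]: "B \<in> sets F" and B_level: "B \<subseteq> level_set_Eu M F u c"
    and B_pos: "0 < emeasure M B" and B_fin: "emeasure M B < \<infinity>"
    using obtain_subalg_subset_finite_positive_measure[OF level_set_Eu_in_sets_F pos] by blast
  have BM: "B \<in> sets M" using BF subalg by (auto simp: subalgebra_def)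
  define f where "f x = complex_of_real (indicator B x / sqrt (measure M B))" for x
  have "f \<in> borel_measurable F" unfolding f_def by measurable
  then have "AE x in M. cond_exp_c M F (\<lambda>x. u x * f x) x = f x * cond_exp_c M F u x"
    by (rule cond_exp_c_mult_measurable[OF u])
  moreover have "f x * cond_exp_c M F u x = c * f x" for x
    using B_level by (cases "x \<in> B") (auto simp: f_def level_set_Eu_def)
  ultimately show ?thesis
    using normalized_indicator_L2[OF BM B_pos B_fin] unfolding point_spectrum_EMu_def f_def[abs_def]
    by auto
qed

lemma level_set_positive_if_point_spectrum:
  assumes "sigma_finite_subalgebra M F" and u: "u \<in> domE M F"
    and "c \<noteq> 0" and "c \<in> point_spectrum_EMu M F u"
  shows "emeasure M (level_set_Eu M F u c) > 0"
proof (rule ccontr)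
  interpret sigma_finite_subalgebra M F by fact
  obtain f where f_L2: "f \<in> L2c M" and f_norm: "L2norm M f = 1"
    and eig: "AE x in M. cond_exp_c M F (\<lambda>y. u y * f y) x = c * f x"
    using assms(4) unfolding point_spectrum_EMu_def by blast
  have [measurable]: "f \<in> borel_measurable M" "u \<in> borel_measurable M"
    using f_L2 u by (auto simp: L2c_def domE_def)
  define h where "h x = cond_exp_c M F (\<lambda>y. u y * f y) x / c" for x
  have [measurable]: "h \<in> borel_measurable F" unfolding h_def by measurable
  then have [measurable]: "h \<in> borel_measurable M" by (rule measurable_from_subalg[OF subalg])
  have f_h: "AE x in M. f x = h x" using eig by eventually_elim (simp add: h_def \<open>c \<noteq> 0\<close>)
  have "AE x in M. cond_exp_c M F (\<lambda>y. u y * f y) x = cond_exp_c M F (\<lambda>y. u y * h y) x"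
    by (rule cond_exp_c_cong) (use f_h in auto)
  moreover have "AE x in M. cond_exp_c M F (\<lambda>y. u y * h y) x = h x * cond_exp_c M F u x"
    by (rule cond_exp_c_mult_measurable[OF u]) measurable
  ultimately have "AE x in M. x \<notin> level_set_Eu M F u c \<longrightarrow> f x = 0"
    using eig f_h AE_space
  proof eventually_elim
    case (elim x)
    show ?case
    proof (intro impI)
      assume "x \<notin> level_set_Eu M F u c"
      with elim(5) have "cond_exp_c M F u x \<noteq> c" by (simp add: level_set_Eu_def)
      moreover have "c * h x = h x * cond_exp_c M F u x"
        using elim(1-4) by simp
      ultimately show "f x = 0"
        using elim(4) by (metis mult.commute mult_cancel_left)
    qed
  qed
  moreover assume "\<not> emeasure M (level_set_Eu M F u c) > 0"
  then have "AE x in M. x \<notin> level_set_Eu M F u c"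
    using level_set_Eu_in_sets_F subalg
    by (intro AE_not_in) (auto simp: subalgebra_def null_sets_def zero_less_iff_neq_zero)
  ultimately have "AE x in M. f x = 0" by eventually_elim auto
  then have "L2norm M f = 0"
    unfolding L2norm_def by (subst integral_cong_AE[where g = "\<lambda>_. 0"]) auto
  with f_norm show False by simp
qed

theorem theorem3p1:
  fixes M F :: "'a measure" and u :: "'a \<Rightarrow> complex"
  assumes "complete_measure M"
    and "sigma_finite_measure M"
    and "sigma_finite_subalgebra M F"
    and "u \<in> domE M F"
    and "EMu_bounded M F u"
  shows "(point_spectrum_EMu M F u - {0} =
           {c. c \<noteq> 0 \<and> emeasure M (level_set_Eu M F u c) > 0})
       \<and> ({c. emeasure M (level_set_Eu M F u c) > 0} \<subseteq> point_spectrum_EMu M F u)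
       \<and> (emeasure M (level_set_Eu M F u 0) > 0 \<longrightarrow>
           {c. emeasure M (level_set_Eu M F u c) > 0} = point_spectrum_EMu M F u)"
proof (intro conjI impI)
  note eigenvalue = point_spectrum_EMu_if_level_set_positive[OF assms(3,4)]
  note level_set = level_set_positive_if_point_spectrum[OF assms(3,4)]
  show "point_spectrum_EMu M F u - {0} = {c. c \<noteq> 0 \<and> emeasure M (level_set_Eu M F u c) > 0}"
    using eigenvalue level_set by auto
  show "{c. emeasure M (level_set_Eu M F u c) > 0} \<subseteq> point_spectrum_EMu M F u"
    using eigenvalue by auto
  show "{c. emeasure M (level_set_Eu M F u c) > 0} = point_spectrum_EMu M F u"
    if "emeasure M (level_set_Eu M F u 0) > 0"
    using eigenvalue level_set that by (metis (mono_tags) mem_Collect_eq subsetI subset_antisym)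
qed

end
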